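(* Let $g$, $\mathbf{g}=g^{\oplus n}$ be as in the context, and let $\mathbf{A},\mathbf{B},\mathbf{C},\mathbf{D}$ be linear operators on $\mathbf{g}$ with components $A_{ij},B_{ij},C_{ij},D_{ij}$ such that $A_{ij}^*=-A_{ji}$, $D_{ij}^*=-D_{ji}$, $B_{ij}^*=C_{ji}$ and such that PB$(\mathbf{A},\mathbf{B},\mathbf{C},\mathbf{D})$ is a Poisson bracket on $\mathbf{g}$. All subscripts are taken mod $n$. Suppose (i) $A_{i+1,j+1}=-B_{i+1,j}=C_{i,j+1}=-D_{i,j}$ for all $i\neq j$; (ii) $A_{j+1,j+1}-D_{j,j}+B_{j+1,j}-C_{j,j+1}=0$ for all $1\le j\le n$. Let $\sigma:\mathbf{g}\to\mathbf{g}$, $\sigma(u_1,\dots,u_n)=(u_2,\dots,u_n,u_1)$, let $\mathcal{M}(u_1,\dots,u_n)=u_n\cdots u_1$, and $T_j=u_j\cdots u_1\cdot u_n\cdots u_{j+1}$ (so $\mathcal{M}\circ\sigma^j(\mathbf{u})=T_j$, $T_0=T_n=\mathcal{M}(\mathbf{u})$). Then: (1) for each $j$, the map $\mathcal{M}\circ\sigma^j:\mathbf{g}\to g$ is Poisson when $g$ carries the bracket PB$(A_{j+1,j+1},B_{j+1,j},C_{j,j+1},D_{j,j})$, i.e. $\{\varphi\circ\mathcal{M}\circ\sigma^j,\psi\circ\mathcal{M}\circ\sigma^j\}_{\mathbf{g}}=\{\varphi,\psi\}_g\circ\mathcal{M}\circ\sigma^j$ for all smooth $\varphi,\psi$ on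 $g$; (2) for every smooth Ad-invariant $\varphi$ on $g$, the Hamiltonian equations on $\mathbf{g}$ generated by $\Phi(\mathbf{u})=\varphi(u_n\cdots u_1)$ are $\dot u_j=u_j\,\mathcal{L}_{j-1}-\mathcal{L}_j\,u_j$ with $\mathcal{L}_j=R_j(d\varphi(T_j))$, where $R_j=A_{j+1,j+1}+B_{j+1,j}=D_{j,j}+C_{j,j+1}$.
   Context: $g$ is an associative algebra with a nondegenerate symmetric bilinear form $\langle\cdot,\cdot\rangle$ with $\langle uv,w\rangle=\langle u,vw\rangle$; $X^*$ denotes the adjoint of a linear operator on $g$. For smooth $\varphi$ on $g$, $\nabla\varphi(u)$ is defined by $\langle\nabla\varphi(u),X\rangle=\frac{d}{d\varepsilon}\varphi(u+\varepsilon X)|_{\varepsilon=0}$, $d\varphi(u)=u\nabla\varphi(u)$, $d'\varphi(u)=\nabla\varphi(u)u$; $\varphi$ is Ad-invariant if $\varphi(huh^{-1})=\varphi(u)$ (then $d\varphi=d'\varphi$). For linear operators $A,B,C,D$ on $g$, PB$(A,B,C,D)$ is $\{\varphi,\psi\}(u)=\langle A(d'\varphi),d'\psi\rangle-\langle D(d\varphi),d\psi\rangle+\langle B(d\varphi),d'\psi\rangle-\langle C(d'\varphi),d\psi\rangle$. $\mathbf{g}=g\oplus\cdots\oplus g$ ($n$ copies), componentwise multiplication, form $\langle\langle\mathbf{u},\mathbf{v}\rangle\rangle=\sum_k\langle u_k,v_k\rangle$; operator components $(\mathbf{A}(\mathbf{u}))_i=\sum_jA_{ij}(u_j)$. For smooth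 $\Phi$ on $\mathbf{g}$, $\nabla_j\Phi$ is the $j$-th gradient component, $d_j\Phi=u_j\nabla_j\Phi$, $d'_j\Phi=\nabla_j\Phi\,u_j$, and PB$(\mathbf{A},\mathbf{B},\mathbf{C},\mathbf{D})$ is $\{\Phi,\Psi\}=\sum_{i,j}\big(\langle A_{ij}(d'_j\Phi),d'_i\Psi\rangle-\langle D_{ij}(d_j\Phi),d_i\Psi\rangle+\langle B_{ij}(d_j\Phi),d'_i\Psi\rangle-\langle C_{ij}(d'_j\Phi),d_i\Psi\rangle\big)$. Hamiltonian equations generated by $\Phi$: $\frac{d}{dt}\ell(\mathbf{u})=\{\Phi,\ell\}(\mathbf{u})$ for all linear functions $\ell$. *)

theory Defs
  imports "HOL-Analysis.Analysis"
begin

fun Ck :: "nat \<Rightarrow> ('v::euclidean_space \<Rightarrow> real) \<Rightarrow> bool" where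
  "Ck 0 f = continuous_on UNIV f"
| "Ck (Suc k) f = ((\<forall>x. f differentiable (at x)) \<and>
       (\<forall>b\<in>Basis. Ck k (\<lambda>x. frechet_derivative f (at x) b)))"

definition smooth :: "('v::euclidean_space \<Rightarrow> real) \<Rightarrow> bool" where
  "smooth f \<longleftrightarrow> (\<forall>k. Ck k f)"

definition is_poisson ::
  "(('v::euclidean_space \<Rightarrow> real) \<Rightarrow> ('v \<Rightarrow> real) \<Rightarrow> 'v \<Rightarrow> real) \<Rightarrow> bool" where
  "is_poisson P \<longleftrightarrow>
     (\<forall>f g. smooth f \<longrightarrow> smooth g \<longrightarrow> smooth (P f g)) \<and>
     (\<forall>f g h a b. smooth f \<longrightarrow> smooth g \<longrightarrow> smooth h \<longrightarrow>
        P (\<lambda>x. a * f x + b * g x) h = (\<lambda>x. a * P f h x + b * P g h x)) \<and>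
     (\<forall>f g. smooth f \<longrightarrow> smooth g \<longrightarrow> P f g = (\<lambda>x. - P g f x)) \<and>
     (\<forall>f g h. smooth f \<longrightarrow> smooth g \<longrightarrow> smooth h \<longrightarrow>
        P f (\<lambda>x. g x * h x) = (\<lambda>x. P f g x * h x + g x * P f h x)) \<and>
     (\<forall>f g h. smooth f \<longrightarrow> smooth g \<longrightarrow> smooth h \<longrightarrow>
        (\<forall>x. P f (P g h) x + P g (P h f) x + P h (P f g) x = 0))"

definition grad :: "('a::real_vector \<Rightarrow> 'a \<Rightarrow> real) \<Rightarrow> ('a \<Rightarrow> real) \<Rightarrow> 'a \<Rightarrow> 'a" where
  "grad form \<phi> u = (THE v. \<forall>X. ((\<lambda>e. \<phi> (u + e *\<^sub>R X)) has_real_derivative form v X) (at 0))"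

definition dl :: "('a::real_algebra \<Rightarrow> 'a \<Rightarrow> real) \<Rightarrow> ('a \<Rightarrow> real) \<Rightarrow> 'a \<Rightarrow> 'a" where
  "dl form \<phi> u = u * grad form \<phi> u"

definition dr :: "('a::real_algebra \<Rightarrow> 'a \<Rightarrow> real) \<Rightarrow> ('a \<Rightarrow> real) \<Rightarrow> 'a \<Rightarrow> 'a" where
  "dr form \<phi> u = grad form \<phi> u * u"

definition PB :: "('a::real_algebra \<Rightarrow> 'a \<Rightarrow> real) \<Rightarrow> ('a \<Rightarrow> 'a) \<Rightarrow> ('a \<Rightarrow> 'a) \<Rightarrow>
    ('a \<Rightarrow> 'a) \<Rightarrow> ('a \<Rightarrow> 'a) \<Rightarrow> ('a \<Rightarrow> real) \<Rightarrow> ('a \<Rightarrow> real) \<Rightarrow> 'a \<Rightarrow> real" where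
  "PB form A B C D \<phi> \<psi> u =
     form (A (dr form \<phi> u)) (dr form \<psi> u) - form (D (dl form \<phi> u)) (dl form \<psi> u)
   + form (B (dl form \<phi> u)) (dr form \<psi> u) - form (C (dr form \<phi> u)) (dl form \<psi> u)"

definition ad_invariant :: "('a::ring_1 \<Rightarrow> real) \<Rightarrow> bool" where
  "ad_invariant \<phi> \<longleftrightarrow> (\<forall>h h' u. h * h' = 1 \<longrightarrow> h' * h = 1 \<longrightarrow> \<phi> (h * u * h') = \<phi> u)"

section \<open>The direct sum g^n, modelled as 'a ^ 'n with the components ordered by enum\<close>

text \<open>Position (1-based, taken mod n) i of the cyclically ordered index type.\<close>
definition ix :: "int \<Rightarrow> 'n::enum" where
  "ix i = enum_class.enum ! nat ((i - 1) mod int CARD('n))"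

definition pos :: "'n::enum \<Rightarrow> int" where
  "pos k = (THE i. 1 \<le> i \<and> i \<le> int CARD('n) \<and> ix i = k)"

definition cmp :: "'a ^ 'n::enum \<Rightarrow> int \<Rightarrow> 'a" where
  "cmp u i = u $ ix i"

definition gradc :: "('a::real_vector \<Rightarrow> 'a \<Rightarrow> real) \<Rightarrow> ('a ^ 'n \<Rightarrow> real) \<Rightarrow> 'a ^ 'n \<Rightarrow> 'n \<Rightarrow> 'a" where
  "gradc form \<Phi> u j = (THE v. \<forall>X. ((\<lambda>e. \<Phi> (u + e *\<^sub>R axis j X)) has_real_derivative form v X) (at 0))"

definition dlc :: "('a::real_algebra \<Rightarrow> 'a \<Rightarrow> real) \<Rightarrow> ('a ^ 'n \<Rightarrow> real) \<Rightarrow> 'a ^ 'n \<Rightarrow> 'n \<Rightarrow> 'a" where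
  "dlc form \<Phi> u j = u $ j * gradc form \<Phi> u j"

definition drc :: "('a::real_algebra \<Rightarrow> 'a \<Rightarrow> real) \<Rightarrow> ('a ^ 'n \<Rightarrow> real) \<Rightarrow> 'a ^ 'n \<Rightarrow> 'n \<Rightarrow> 'a" where
  "drc form \<Phi> u j = gradc form \<Phi> u j * u $ j"

definition PBn :: "('a::real_algebra \<Rightarrow> 'a \<Rightarrow> real) \<Rightarrow>
    ('n::finite \<Rightarrow> 'n \<Rightarrow> 'a \<Rightarrow> 'a) \<Rightarrow> ('n \<Rightarrow> 'n \<Rightarrow> 'a \<Rightarrow> 'a) \<Rightarrow>
    ('n \<Rightarrow> 'n \<Rightarrow> 'a \<Rightarrow> 'a) \<Rightarrow> ('n \<Rightarrow> 'n \<Rightarrow> 'a \<Rightarrow> 'a) \<Rightarrow>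
    ('a ^ 'n \<Rightarrow> real) \<Rightarrow> ('a ^ 'n \<Rightarrow> real) \<Rightarrow> 'a ^ 'n \<Rightarrow> real" where
  "PBn form A B C D \<Phi> \<Psi> u =
     (\<Sum>i\<in>UNIV. \<Sum>j\<in>UNIV.
        form (A i j (drc form \<Phi> u j)) (drc form \<Psi> u i)
      - form (D i j (dlc form \<Phi> u j)) (dlc form \<Psi> u i)
      + form (B i j (dlc form \<Phi> u j)) (drc form \<Psi> u i)
      - form (C i j (drc form \<Phi> u j)) (dlc form \<Psi> u i))"

text \<open>Ordered product f hi * f (hi-1) * ... * f lo (empty product = 1).\<close>
definition dprod :: "(int \<Rightarrow> 'a::monoid_mult) \<Rightarrow> int \<Rightarrow> int \<Rightarrow> 'a" where
  "dprod f lo hi = prod_list (map f (rev [lo..hi]))"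

definition Mon :: "'a::monoid_mult ^ 'n::enum \<Rightarrow> 'a" where
  "Mon u = dprod (cmp u) 1 (int CARD('n))"

definition Tj :: "'a::monoid_mult ^ 'n::enum \<Rightarrow> int \<Rightarrow> 'a" where
  "Tj u j = dprod (cmp u) 1 j * dprod (cmp u) (j + 1) (int CARD('n))"

definition shift :: "('a, 'n::enum) vec \<Rightarrow> ('a, 'n) vec" where
  "shift u = vec_lambda (\<lambda>k. cmp u (pos k + 1))"

end

theory Submission
  imports Defs
begin

(* Write T_c = u_{c+n} ... u_{c+1}, so that M o sigma^c = T_c. For Phi = phi o T_c all component
   gradients come from the single element a_q = u_q ... u_{c+1} (grad phi)(T_c) u_{c+n} ... u_{q+1}:
   d_q Phi = a_q and d'_q Phi = a_{q-1}, with a_c = d'phi(T_c) and a_{c+n} = d phi(T_c).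
   (1) {phi o T_c, psi o T_c} is therefore a double sum over pairs of cuts (r, p) in [c, c+n]^2;
   conditions (i) and (ii) kill every coefficient except at the four corners r, p in {c, c+n},
   and these are exactly the four terms of PB(A_{c+1,c+1}, B_{c+1,c}, C_{c,c+1}, D_{c,c}) at T_c.
   (2) For Psi linear the same expansion gives u_r X_r - Y_r u_r as the r-th component of the
   Hamiltonian vector field. Ad-invariance gives phi(kh) = phi(hk), first for invertible h and
   then for all h since h + t is invertible for all small t > 0; differentiating,
   h (grad phi)(kh) k = d phi(hk), so a_q = d phi(T_q). In particular a_0 = a_n, and (i), (ii)
   reduce X_r to L_{r-1} and Y_r to L_r. *)

lemma ix_eq_iff: "ix i = (ix i' :: 'n::enum) \<longleftrightarrow> i mod int CARD('n) = i' mod int CARD('n)"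
proof -
  let ?N = "int CARD('n)" and ?e = "enum_class.enum :: 'n list"
  have len: "length ?e = CARD('n)"
    by (simp add: card_UNIV_length_enum)
  have "nat ((k - 1) mod ?N) < length ?e" for k
    using len by (simp add: nat_less_iff)
  then have "ix i = (ix i' :: 'n) \<longleftrightarrow> nat ((i - 1) mod ?N) = nat ((i' - 1) mod ?N)"
    unfolding ix_def by (simp add: nth_eq_iff_index_eq[OF enum_distinct])
  also have "\<dots> \<longleftrightarrow> i mod ?N = i' mod ?N"
    by (simp add: eq_nat_nat_iff mod_eq_dvd_iff)
  finally show ?thesis .
qed

lemma ix_add_card [simp]: "(ix (i + int CARD('n)) :: 'n::enum) = ix i"
  by (simp add: ix_eq_iff)

lemma inj_on_ix_window: "inj_on (ix :: int \<Rightarrow> 'n::enum) {a + 1..a + int CARD('n)}"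
proof
  fix x y assume x: "x \<in> {a + 1..a + int CARD('n)}" and y: "y \<in> {a + 1..a + int CARD('n)}"
    and "(ix x :: 'n) = ix y"
  then have "int CARD('n) dvd x - y"
    by (simp add: ix_eq_iff mod_eq_dvd_iff)
  moreover have "\<bar>x - y\<bar> < int CARD('n)"
    using x y by auto
  ultimately show "x = y"
    using dvd_imp_le_int[of "x - y" "int CARD('n)"] by fastforce
qed

lemma ix_window_eq_UNIV: "(ix :: int \<Rightarrow> 'n::enum) ` {a + 1..a + int CARD('n)} = UNIV"
  by (simp add: card_image[OF inj_on_ix_window] card_eq_UNIV_imp_eq_UNIV)

lemma ix_neq_in_window:
  "x \<in> {a + 1..a + int CARD('n)} \<Longrightarrow> y \<in> {a + 1..a + int CARD('n)} \<Longrightarrow> x \<noteq> y \<Longrightarrow>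
    (ix x :: 'n::enum) \<noteq> ix y"
  using inj_onD[OF inj_on_ix_window] by blast

lemma sum_UNIV_eq_sum_window:
  "(\<Sum>k\<in>UNIV. f k) = (\<Sum>q\<in>{a + 1..a + int CARD('n)}. f (ix q :: 'n::enum))"
  using sum.reindex[OF inj_on_ix_window, of f] by (simp add: ix_window_eq_UNIV)

lemma pos_in_window: "pos k \<in> {1..int CARD('n)}"
  and ix_pos [simp]: "ix (pos k) = (k :: 'n::enum)"
proof -
  have "k \<in> ix ` {1..int CARD('n)}"
    using ix_window_eq_UNIV[where a=0, where 'n='n] by simp
  then obtain i where i: "i \<in> {1..int CARD('n)}" "ix i = k"
    by blast
  have "\<exists>!i. 1 \<le> i \<and> i \<le> int CARD('n) \<and> ix i = k"
    using i inj_onD[OF inj_on_ix_window[where a=0, where 'n='n]] by (intro ex1I[of _ i]) auto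
  from theI'[OF this] show "pos k \<in> {1..int CARD('n)}" "ix (pos k) = k"
    unfolding pos_def by auto
qed

lemma pos_ix: "i \<in> {1..int CARD('n)} \<Longrightarrow> pos (ix i :: 'n::enum) = i"
  using inj_onD[OF inj_on_ix_window[where a=0, where 'n='n], of "pos (ix i :: 'n)" i]
    pos_in_window[of "ix i :: 'n"] ix_pos[of "ix i :: 'n"] by simp

lemma ix_pos_add: "(ix (pos (ix i :: 'n::enum) + c) :: 'n) = ix (i + c)"
proof -
  have "pos (ix i :: 'n) mod int CARD('n) = i mod int CARD('n)"
    using ix_pos[of "ix i :: 'n"] by (simp only: ix_eq_iff)
  then show ?thesis
    by (simp add: ix_eq_iff mod_eq_dvd_iff)
qed

lemma cmp_shift: "cmp (shift u) p = cmp u (p + 1)"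
  by (simp add: cmp_def shift_def ix_pos_add)

lemma cmp_funpow_shift: "cmp ((shift ^^ j) u) p = cmp u (p + int j)"
  by (induction j arbitrary: p) (simp_all add: cmp_shift algebra_simps)

lemma sum_int_interval_shift: "(\<Sum>p\<in>{a + 1..b::int}. g p) = (\<Sum>p\<in>{a..b - 1}. g (p + 1))"
  by (rule sum.reindex_bij_witness[of _ "\<lambda>p. p + 1" "\<lambda>p. p - 1"]) auto

lemma sum_interval_rotate:
  fixes g :: "int \<Rightarrow> 'b::comm_monoid_add"
  assumes "1 \<le> N" and "g 0 = g N"
  shows "(\<Sum>p\<in>{1..N}. g p) = (\<Sum>p\<in>{1..N}. g (p - 1))"
proof -
  have "(\<Sum>p\<in>{1..N}. g (p - 1)) = (\<Sum>p\<in>{0..N - 1}. g p)"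
    using sum_int_interval_shift[of "\<lambda>p. g (p - 1)" 0 N] by simp
  moreover have "{0..N - 1} = insert 0 {1..N - 1}" and "{1..N} = insert N {1..N - 1}"
    using assms(1) by auto
  ultimately show ?thesis
    using assms(2) by simp
qed

lemma sum_sum_restrict:
  assumes "finite Q" "S \<subseteq> Q" "T \<subseteq> Q"
  shows "(\<Sum>r\<in>Q. \<Sum>p\<in>Q. if r \<in> S \<and> p \<in> T then f r p else 0) =
    (\<Sum>r\<in>S. \<Sum>p\<in>T. f r p)"
proof -
  have "(\<Sum>p\<in>Q. if r \<in> S \<and> p \<in> T then f r p else 0) =
      (if r \<in> S then \<Sum>p\<in>T. f r p else 0)" for r
    using sum.inter_restrict[OF assms(1), of "f r" T] assms(3)
    by (cases "r \<in> S") (simp_all add: Int_absorb1)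
  then show ?thesis
    using sum.inter_restrict[OF assms(1), of "\<lambda>r. \<Sum>p\<in>T. f r p" S] assms(2)
    by (simp add: Int_absorb1)
qed

lemma dprod_empty: "hi < lo \<Longrightarrow> dprod f lo hi = 1"
  by (simp add: dprod_def)

lemma dprod_upper: "lo \<le> hi \<Longrightarrow> dprod f lo hi = f hi * dprod f lo (hi - 1)"
  by (simp add: dprod_def upto_rec2)

lemma dprod_split:
  assumes "lo - 1 \<le> m" "m \<le> hi"
  shows "dprod f lo hi = dprod f (m + 1) hi * dprod f lo m"
proof (cases "m = hi")
  case False
  then have "[lo..hi] = [lo..m] @ [m + 1..hi]"
    using assms upto_split1[of lo "m + 1" hi] by simp
  then show ?thesis
    unfolding dprod_def by simp
qed (simp add: dprod_empty)

lemma dprod_cong: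
  assumes "\<And>p. lo \<le> p \<Longrightarrow> p \<le> hi \<Longrightarrow> f p = g p"
  shows "dprod f lo hi = dprod g lo hi"
  unfolding dprod_def using assms by (intro arg_cong[where f=prod_list] map_cong) auto

lemma dprod_shift: "dprod (\<lambda>p. f (p + c)) lo hi = dprod f (lo + c) (hi + c)"
proof -
  have "[lo + c..hi + c] = map (\<lambda>p. p + c) [lo..hi]"
    by (rule nth_equalityI) auto
  then show ?thesis
    unfolding dprod_def by (simp add: rev_map comp_def)
qed

definition cyc_prod :: "'a::monoid_mult ^ 'n::enum \<Rightarrow> int \<Rightarrow> 'a" where
  "cyc_prod u c = dprod (cmp u) (c + 1) (c + int CARD('n))"

lemma Mon_funpow_shift: "Mon ((shift ^^ j) u) = cyc_prod u (int j)"
  unfolding Mon_def cyc_prod_def cmp_funpow_shift dprod_shift by (simp add: add.commute)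

lemma cmp_add_axis:
  "cmp (u + e *\<^sub>R axis k X) p = cmp u p + (if ix p = k then e *\<^sub>R X else 0)"
  by (simp add: cmp_def axis_def)

lemma cyc_prod_split:
  fixes u :: "'a::monoid_mult ^ 'n::enum"
  assumes "q \<in> {c + 1..c + int CARD('n)}"
  shows "cyc_prod u c =
    dprod (cmp u) (q + 1) (c + int CARD('n)) * cmp u q * dprod (cmp u) (c + 1) (q - 1)"
  using assms dprod_split[of "c + 1" q "c + int CARD('n)" "cmp u"] dprod_upper[of "c + 1" q "cmp u"]
  by (simp add: cyc_prod_def mult.assoc)

lemma cyc_prod_add_axis:
  fixes u :: "'a::real_algebra_1 ^ 'n::enum"
  assumes q: "q \<in> {c + 1..c + int CARD('n)}"
  shows "cyc_prod (u + e *\<^sub>R axis (ix q) X) c =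
    dprod (cmp u) (q + 1) (c + int CARD('n)) * (cmp u q + e *\<^sub>R X) * dprod (cmp u) (c + 1) (q - 1)"
proof -
  let ?v = "u + e *\<^sub>R axis (ix q) X"
  have "cmp ?v p = cmp u p" if "p \<in> {c + 1..c + int CARD('n)}" "p \<noteq> q" for p
    using ix_neq_in_window[OF that(1) q that(2)] by (simp add: cmp_add_axis)
  then have "dprod (cmp ?v) (q + 1) (c + int CARD('n)) = dprod (cmp u) (q + 1) (c + int CARD('n))"
    and "dprod (cmp ?v) (c + 1) (q - 1) = dprod (cmp u) (c + 1) (q - 1)"
    using q by (auto intro!: dprod_cong)
  then show ?thesis
    using cyc_prod_split[OF q, of ?v] by (simp add: cmp_add_axis)
qed

lemma smooth_imp_differentiable: "smooth \<phi> \<Longrightarrow> \<phi> differentiable (at x)"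
  using Ck.simps(2)[of 0 \<phi>] unfolding smooth_def by blast

lemma has_vector_derivative_iff_linear_functionals:
  fixes \<gamma> :: "real \<Rightarrow> 'b::euclidean_space"
  shows "(\<forall>l. linear l \<longrightarrow> ((\<lambda>s. l (\<gamma> s)) has_real_derivative l v) (at t))
     \<longleftrightarrow> (\<gamma> has_vector_derivative v) (at t)"
proof
  assume H: "\<forall>l. linear l \<longrightarrow> ((\<lambda>s. l (\<gamma> s)) has_real_derivative l v) (at t)"
  show "(\<gamma> has_vector_derivative v) (at t)"
    unfolding has_vector_derivative_def
  proof (subst has_derivative_componentwise_within, intro ballI)
    fix i :: 'b assume "i \<in> Basis"
    have "((\<lambda>s. \<gamma> s \<bullet> i) has_real_derivative v \<bullet> i) (at t)"
      using H bounded_linear_inner_left bounded_linear.linear by blast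
    then show "((\<lambda>x. \<gamma> x \<bullet> i) has_derivative (\<lambda>x. (x *\<^sub>R v) \<bullet> i)) (at t)"
      by (simp add: has_field_derivative_def mult_commute_abs)
  qed
next
  assume H: "(\<gamma> has_vector_derivative v) (at t)"
  show "\<forall>l. linear l \<longrightarrow> ((\<lambda>s. l (\<gamma> s)) has_real_derivative l v) (at t)"
  proof (intro allI impI)
    fix l :: "'b \<Rightarrow> real" assume l: "linear l"
    have "((\<lambda>s. l (\<gamma> s)) has_derivative (\<lambda>x. l (x *\<^sub>R v))) (at t)"
      using bounded_linear.has_derivative[OF linear_conv_bounded_linear[THEN iffD1, OF l]
          H[unfolded has_vector_derivative_def]] .
    then show "((\<lambda>s. l (\<gamma> s)) has_real_derivative l v) (at t)"
      by (simp add: has_field_derivative_def linear_scale[OF l] mult_commute_abs)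
  qed
qed

section \<open>Invertibility and Ad-invariance\<close>

lemma eigenvector_combination_eq_0:
  fixes f :: "'b::real_vector \<Rightarrow> 'b"
  assumes f: "linear f" and "finite S"
    and ev: "\<And>t. t \<in> S \<Longrightarrow> ev t \<noteq> 0 \<and> f (ev t) = t *\<^sub>R ev t"
    and "(\<Sum>t\<in>S. c t *\<^sub>R ev t) = 0"
  shows "\<forall>t\<in>S. c t = 0"
  using assms(2-)
proof (induction S arbitrary: c rule: finite_induct)
  case (insert s S)
  have sum_S: "(\<Sum>t\<in>S. c t *\<^sub>R ev t) = - c s *\<^sub>R ev s"
    using insert.prems(2) insert.hyps by (simp add: eq_neg_iff_add_eq_0 add.commute)
  have "(\<Sum>t\<in>S. c t *\<^sub>R f (ev t)) = - (c s * s) *\<^sub>R ev s"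
    using arg_cong[OF sum_S, of f] insert.prems(1)
    by (simp add: linear_sum[OF f] linear_scale[OF f] linear_neg[OF f])
  moreover have "(\<Sum>t\<in>S. c t *\<^sub>R f (ev t)) = (\<Sum>t\<in>S. (c t * t) *\<^sub>R ev t)"
    using insert.prems(1) by (intro sum.cong) auto
  ultimately have "(\<Sum>t\<in>S. (c t * (t - s)) *\<^sub>R ev t) = 0"
    using arg_cong[OF sum_S, of "scaleR s"]
    by (simp add: algebra_simps scaleR_sum_right sum_subtractf)
  then have "\<forall>t\<in>S. c t * (t - s) = 0"
    using insert.IH[of "\<lambda>t. c t * (t - s)"] insert.prems(1) by blast
  then have "\<forall>t\<in>S. c t = 0"
    using insert.hyps(2) by auto
  moreover from this have "c s = 0"
    using sum_S insert.prems(1) by simp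
  ultimately show ?case
    by simp
qed simp

lemma finite_eigenvalues:
  fixes f :: "'b::euclidean_space \<Rightarrow> 'b"
  assumes f: "linear f"
  shows "finite {t. \<exists>v. v \<noteq> 0 \<and> f v = t *\<^sub>R v}"
proof (rule ccontr)
  define E where "E = {t. \<exists>v. v \<noteq> 0 \<and> f v = t *\<^sub>R v}"
  assume "infinite {t. \<exists>v. v \<noteq> 0 \<and> f v = t *\<^sub>R v}"
  then obtain S where S: "finite S" "card S = DIM('b) + 1" "S \<subseteq> E"
    using infinite_arbitrarily_large[of E "DIM('b) + 1"] unfolding E_def by blast
  define ev where "ev t = (SOME v. v \<noteq> 0 \<and> f v = t *\<^sub>R v)" for t
  have ev: "ev t \<noteq> 0 \<and> f (ev t) = t *\<^sub>R ev t" if "t \<in> S" for t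
    unfolding ev_def by (rule someI_ex) (use that S(3) E_def in auto)
  have inj: "inj_on ev S"
  proof
    fix x y assume x: "x \<in> S" and y: "y \<in> S" and eq: "ev x = ev y"
    have "x *\<^sub>R ev x = f (ev x)"
      using ev[OF x] by simp
    also have "\<dots> = y *\<^sub>R ev x"
      using ev[OF y] eq by simp
    finally show "x = y"
      using ev[OF x] by simp
  qed
  have "independent (ev ` S)"
  proof
    assume "dependent (ev ` S)"
    then obtain c where c: "\<exists>v\<in>ev ` S. c v \<noteq> 0" "(\<Sum>v\<in>ev ` S. c v *\<^sub>R v) = 0"
      using real_vector.dependent_finite[of "ev ` S"] S(1) by blast
    have "(\<Sum>t\<in>S. c (ev t) *\<^sub>R ev t) = 0"
      using c(2) sum.reindex[OF inj, of "\<lambda>v. c v *\<^sub>R v"] by (simp add: o_def)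
    then show False
      using eigenvector_combination_eq_0[OF f S(1) ev, of "c \<circ> ev"] c(1) by auto
  qed
  then have "card (ev ` S) \<le> DIM('b)"
    by (rule independent_card_le)
  then show False
    using card_image[OF inj] S(2) by simp
qed

lemma eventually_invertible_add_of_real:
  fixes y :: "'a::{real_algebra_1, euclidean_space}"
  shows "\<forall>\<^sub>F t in at_right 0. \<exists>z. (y + of_real t) * z = 1 \<and> z * (y + of_real t) = 1"
proof -
  define E where "E = {t. \<exists>v. v \<noteq> 0 \<and> y * v = t *\<^sub>R v}"
  have "finite E"
    unfolding E_def by (rule finite_eigenvalues) (auto intro!: linearI simp: distrib_left)
  then have "\<forall>\<^sub>F t in at 0. t \<notin> uminus ` E"
    using islimpt_finite[of "uminus ` E" 0] islimpt_iff_eventually by blast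
  then have "\<forall>\<^sub>F t in at 0. - t \<notin> E"
    by (rule eventually_mono) force
  then have "\<forall>\<^sub>F t in at_right 0. - t \<notin> E"
    by (rule filter_leD[OF at_le, rotated]) simp
  then show ?thesis
  proof eventually_elim
    case (elim t)
    let ?s = "y + of_real t :: 'a"
    have "linear (\<lambda>v. ?s * v)"
      by (auto intro!: linearI simp: distrib_left)
    moreover have "inj (\<lambda>v. ?s * v)"
    proof (rule linear_injective_0[OF \<open>linear (\<lambda>v. ?s * v)\<close>, THEN iffD2], intro allI impI)
      fix v assume "?s * v = 0"
      then have "y * v = (- t) *\<^sub>R v"
        by (simp add: distrib_right scaleR_conv_of_real eq_neg_iff_add_eq_0)
      then show "v = 0"
        using elim unfolding E_def by blast
    qed
    ultimately obtain z where z: "?s * z = 1"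
      by (metis linear_injective_imp_surjective surjD)
    have "?s * (z * ?s) = ?s * 1"
      by (simp add: z mult.assoc[symmetric])
    then have "z * ?s = 1"
      using injD[OF \<open>inj (\<lambda>v. ?s * v)\<close>] by blast
    with z show ?case
      by blast
  qed
qed

lemma ad_invariant_mult_commute:
  fixes \<phi> :: "'a::{real_algebra_1, euclidean_space} \<Rightarrow> real"
  assumes cont: "continuous_on UNIV \<phi>" and ad: "ad_invariant \<phi>"
  shows "\<phi> (k * h) = \<phi> (h * k)"
proof -
  define F where "F t = \<phi> (k * (h + of_real t)) - \<phi> ((h + of_real t) * k)" for t :: real
  have "\<forall>\<^sub>F t in at_right 0. F t = 0"
    using eventually_invertible_add_of_real[of h]
  proof eventually_elim
    case (elim t)
    then obtain z where z: "(h + of_real t) * z = 1" "z * (h + of_real t) = 1"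
      by blast
    have "(h + of_real t) * (k * (h + of_real t)) * z = (h + of_real t) * k"
      by (simp add: mult.assoc z(1))
    moreover have "\<phi> ((h + of_real t) * (k * (h + of_real t)) * z) = \<phi> (k * (h + of_real t))"
      using ad z unfolding ad_invariant_def by blast
    ultimately show ?case
      by (simp add: F_def)
  qed
  then have "(F \<longlongrightarrow> 0) (at_right 0)"
    by (rule tendsto_eventually)
  moreover have "continuous (at 0) F"
  proof -
    have lin: "continuous (at 0) (\<lambda>t::real. h + of_real t :: 'a)"
      unfolding of_real_def by (intro continuous_intros)
    have "continuous (at 0) (\<lambda>t. k * (h + of_real t))"
      by (rule bilinear_continuous_compose[OF continuous_const lin bilinear_times])
    moreover have "continuous (at 0) (\<lambda>t. (h + of_real t) * k)"
      by (rule bilinear_continuous_compose[OF lin continuous_const bilinear_times])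
    ultimately show ?thesis
      unfolding F_def using cont continuous_at_compose[of 0 _ \<phi>]
      by (intro continuous_diff) (auto simp: continuous_on_eq_continuous_at comp_def)
  qed
  then have "(F \<longlongrightarrow> F 0) (at_right 0)"
    unfolding continuous_at by (rule tendsto_mono[OF at_le, rotated]) simp
  ultimately have "F 0 = 0"
    using tendsto_unique trivial_limit_at_right_real by blast
  then show ?thesis
    by (simp add: F_def)
qed

section \<open>Gradients with respect to an invariant form\<close>

locale invariant_form =
  fixes form :: "'a::{real_algebra_1, euclidean_space} \<Rightarrow> 'a \<Rightarrow> real"
  assumes form_bilinear: "bilinear form"
    and form_sym: "\<And>u v. form u v = form v u"
    and form_nondeg: "\<And>v. (\<forall>w. form v w = 0) \<Longrightarrow> v = 0"
    and form_inv: "\<And>u v w. form (u * v) w = form u (v * w)"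
begin

lemmas form_linear_simps =
  bilinear_ladd[OF form_bilinear] bilinear_radd[OF form_bilinear]
  bilinear_lsub[OF form_bilinear] bilinear_rsub[OF form_bilinear]
  bilinear_lneg[OF form_bilinear] bilinear_rneg[OF form_bilinear]
  bilinear_lzero[OF form_bilinear] bilinear_rzero[OF form_bilinear]

lemma form_sum_right: "form x (\<Sum>i\<in>S. f i) = (\<Sum>i\<in>S. form x (f i))"
  using form_bilinear linear_sum unfolding bilinear_def by blast

lemma form_mult_right: "form x (w * u) = form w (u * x)"
  by (metis form_inv form_sym)

lemma form_mult_left: "form x (u * w) = form w (x * u)"
  by (metis form_inv form_sym)

lemma form_sandwich: "form a (L * X * R) = form (R * a * L) X"
  by (metis form_inv form_sym mult.assoc)

lemma form_eqI: "(\<And>X. form v X = form v' X) \<Longrightarrow> v = v'"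
  using form_nondeg[of "v - v'"] by (simp add: form_linear_simps)

lemma form_represents_linear:
  assumes "linear g"
  obtains v where "\<And>X. form v X = g X"
proof -
  define F where "F v = (\<Sum>b\<in>Basis. form v b *\<^sub>R b)" for v
  have F_inner: "F v \<bullet> X = form v X" for v X
  proof -
    have "form v X = form v (\<Sum>b\<in>Basis. (X \<bullet> b) *\<^sub>R b)"
      by (simp add: euclidean_representation)
    then show ?thesis
      by (simp add: F_def form_sum_right bilinear_rmul[OF form_bilinear] inner_sum_left
          inner_sum_right inner_commute mult.commute)
  qed
  have "linear F"
    by (rule linearI) (simp_all add: F_def form_linear_simps bilinear_lmul[OF form_bilinear]
        scaleR_add_left sum.distrib scaleR_sum_right)
  moreover have "inj F"
    using form_nondeg
    by (intro linear_injective_0[OF \<open>linear F\<close>, THEN iffD2]) (metis F_inner inner_zero_left)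
  ultimately obtain v where v: "F v = (\<Sum>b\<in>Basis. g b *\<^sub>R b)"
    by (metis linear_injective_imp_surjective surjD)
  have "g X = (\<Sum>b\<in>Basis. g b *\<^sub>R b) \<bullet> X" for X
  proof -
    have "g X = g (\<Sum>b\<in>Basis. (X \<bullet> b) *\<^sub>R b)"
      by (simp add: euclidean_representation)
    then show ?thesis
      by (simp add: linear_sum[OF assms] linear_scale[OF assms] inner_sum_left inner_sum_right
          inner_commute mult.commute)
  qed
  then show thesis
    using that F_inner v by metis
qed

lemma grad_eqI:
  assumes "\<And>X. ((\<lambda>e. \<phi> (u + e *\<^sub>R X)) has_real_derivative form v X) (at 0)"
  shows "grad form \<phi> u = v"
  unfolding grad_def
proof (rule the_equality)
  fix v' assume "\<forall>X. ((\<lambda>e. \<phi> (u + e *\<^sub>R X)) has_real_derivative form v' X) (at 0)"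
  then show "v' = v"
    using assms DERIV_unique by (blast intro: form_eqI)
qed (use assms in blast)

lemma gradc_eqI:
  assumes "\<And>X. ((\<lambda>e. \<Phi> (u + e *\<^sub>R axis j X)) has_real_derivative form v X) (at 0)"
  shows "gradc form \<Phi> u j = v"
  unfolding gradc_def
proof (rule the_equality)
  fix v' assume "\<forall>X. ((\<lambda>e. \<Phi> (u + e *\<^sub>R axis j X)) has_real_derivative form v' X) (at 0)"
  then show "v' = v"
    using assms DERIV_unique by (blast intro: form_eqI)
qed (use assms in blast)

lemma has_real_derivative_grad:
  assumes "\<phi> differentiable (at u)"
  shows "((\<lambda>e. \<phi> (u + e *\<^sub>R X)) has_real_derivative form (grad form \<phi> u) X) (at 0)"
proof -
  let ?D = "frechet_derivative \<phi> (at u)"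
  have D: "(\<phi> has_derivative ?D) (at u)"
    using assms frechet_derivative_works by blast
  have dir: "((\<lambda>e. \<phi> (u + e *\<^sub>R X)) has_real_derivative ?D X) (at 0)" for X
  proof -
    have "((\<lambda>e. u + e *\<^sub>R X) has_derivative (\<lambda>e. e *\<^sub>R X)) (at 0)"
      by (auto intro!: derivative_eq_intros)
    then have "((\<phi> \<circ> (\<lambda>e. u + e *\<^sub>R X)) has_derivative (?D \<circ> (\<lambda>e. e *\<^sub>R X))) (at 0)"
      by (rule diff_chain_at) (simp add: D)
    then show ?thesis
      by (simp add: has_field_derivative_def linear_scale[OF has_derivative_linear[OF D]]
          mult_commute_abs comp_def)
  qed
  obtain v where v: "\<And>X. form v X = ?D X"
    using form_represents_linear has_derivative_linear[OF D] by blast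
  with dir have "grad form \<phi> u = v"
    by (intro grad_eqI) simp
  with dir v show ?thesis
    by simp
qed

lemma has_real_derivative_grad_sandwich:
  assumes "\<phi> differentiable (at (L * x * R))"
  shows "((\<lambda>e. \<phi> (L * (x + e *\<^sub>R X) * R)) has_real_derivative
           form (R * grad form \<phi> (L * x * R) * L) X) (at 0)"
proof -
  have "L * (x + e *\<^sub>R X) * R = L * x * R + e *\<^sub>R (L * X * R)" for e
    by (simp add: algebra_simps)
  then show ?thesis
    using has_real_derivative_grad[OF assms, of "L * X * R"] by (simp add: form_sandwich)
qed

lemma linear_eq_sum_gradc:
  fixes l :: "'a ^ 'n::finite \<Rightarrow> real"
  assumes l: "linear l"
  shows "l v = (\<Sum>k\<in>UNIV. form (gradc form l u k) (v $ k))"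
proof -
  have gradc_l: "form (gradc form l u k) X = l (axis k X)" for k X
  proof -
    have "linear (axis k :: 'a \<Rightarrow> 'a ^ 'n)"
      by (rule linearI) (simp_all add: axis_def vec_eq_iff)
    then have "linear (\<lambda>X. l (axis k X))"
      using linear_compose[OF _ l] by (simp add: o_def)
    then obtain w where w: "\<And>X. form w X = l (axis k X)"
      using form_represents_linear by blast
    have "gradc form l u k = w"
    proof (rule gradc_eqI)
      fix X
      have "(\<lambda>e. l (u + e *\<^sub>R axis k X)) = (\<lambda>e. l u + e * l (axis k X))"
        by (simp add: fun_eq_iff linear_add[OF l] linear_scale[OF l])
      then show "((\<lambda>e. l (u + e *\<^sub>R axis k X)) has_real_derivative form w X) (at 0)"
        by (auto simp: w intro!: derivative_eq_intros)
    qed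
    with w show ?thesis
      by simp
  qed
  have "v = (\<Sum>k\<in>UNIV. axis k (v $ k))"
    by (simp add: vec_eq_iff axis_def)
  then have "l v = (\<Sum>k\<in>UNIV. l (axis k (v $ k)))"
    by (metis linear_sum[OF l])
  then show ?thesis
    by (simp add: gradc_l)
qed

lemma grad_mult_swap:
  assumes diff: "\<And>x. \<phi> differentiable (at x)" and swap: "\<And>h k. \<phi> (k * h) = \<phi> (h * k)"
  shows "h * grad form \<phi> (k * h) = grad form \<phi> (h * k) * h"
proof (rule form_eqI)
  fix X
  have "((\<lambda>e. \<phi> (1 * (k + e *\<^sub>R X) * h)) has_real_derivative
      form (h * grad form \<phi> (1 * k * h) * 1) X) (at 0)"
    by (rule has_real_derivative_grad_sandwich[OF diff])
  moreover have "((\<lambda>e. \<phi> (h * (k + e *\<^sub>R X) * 1)) has_real_derivative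
      form (1 * grad form \<phi> (h * k * 1) * h) X) (at 0)"
    by (rule has_real_derivative_grad_sandwich[OF diff])
  ultimately show "form (h * grad form \<phi> (k * h)) X = form (grad form \<phi> (h * k) * h) X"
    using swap DERIV_unique by fastforce
qed

lemma ad_invariant_grad_sandwich:
  assumes diff: "\<And>x. \<phi> differentiable (at x)" and "ad_invariant \<phi>"
  shows "h * grad form \<phi> (k * h) * k = dl form \<phi> (h * k)"
proof -
  have "continuous_on UNIV \<phi>"
    by (simp add: differentiable_imp_continuous_on differentiable_on_def diff)
  then have swap: "\<And>h k. \<phi> (k * h) = \<phi> (h * k)"
    using ad_invariant_mult_commute \<open>ad_invariant \<phi>\<close> by blast
  have "h * grad form \<phi> (k * h) * k = grad form \<phi> (h * k) * (h * k)"
    by (simp add: grad_mult_swap[OF diff swap] mult.assoc)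
  also have "\<dots> = h * k * grad form \<phi> (h * k)"
    using grad_mult_swap[OF diff swap, of "h * k" 1] by simp
  finally show ?thesis
    by (simp add: dl_def)
qed

definition grad_cut :: "('a \<Rightarrow> real) \<Rightarrow> 'a ^ 'n::enum \<Rightarrow> int \<Rightarrow> int \<Rightarrow> 'a" where
  "grad_cut \<phi> u c q = dprod (cmp u) (c + 1) q * grad form \<phi> (cyc_prod u c) *
     dprod (cmp u) (q + 1) (c + int CARD('n))"

lemma grad_cut_lower: "grad_cut \<phi> u c c = dr form \<phi> (cyc_prod u c)"
  by (simp add: grad_cut_def dr_def cyc_prod_def dprod_empty)

lemma grad_cut_upper: "grad_cut \<phi> u c (c + int CARD('n)) = dl form \<phi> (cyc_prod u c)"
  for u :: "'a ^ 'n::enum"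
  by (simp add: grad_cut_def dl_def cyc_prod_def dprod_empty)

lemma gradc_cyc_prod:
  fixes u :: "'a ^ 'n::enum"
  assumes diff: "\<And>x. \<phi> differentiable (at x)" and q: "q \<in> {c + 1..c + int CARD('n)}"
  shows "gradc form (\<lambda>v. \<phi> (cyc_prod v c)) u (ix q) =
    dprod (cmp u) (c + 1) (q - 1) * grad form \<phi> (cyc_prod u c) *
    dprod (cmp u) (q + 1) (c + int CARD('n))"
proof (rule gradc_eqI)
  fix X
  let ?L = "dprod (cmp u) (q + 1) (c + int CARD('n))" and ?R = "dprod (cmp u) (c + 1) (q - 1)"
  show "((\<lambda>e. \<phi> (cyc_prod (u + e *\<^sub>R axis (ix q) X) c)) has_real_derivative
      form (?R * grad form \<phi> (cyc_prod u c) * ?L) X) (at 0)"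
    unfolding cyc_prod_add_axis[OF q] cyc_prod_split[OF q, of u]
    by (rule has_real_derivative_grad_sandwich[OF diff])
qed

lemma dlc_cyc_prod:
  fixes u :: "'a ^ 'n::enum"
  assumes "\<And>x. \<phi> differentiable (at x)" and q: "q \<in> {c + 1..c + int CARD('n)}"
  shows "dlc form (\<lambda>v. \<phi> (cyc_prod v c)) u (ix q) = grad_cut \<phi> u c q"
  using q dprod_upper[of "c + 1" q "cmp u"]
  by (simp add: dlc_def gradc_cyc_prod[OF assms] grad_cut_def cmp_def mult.assoc)

lemma drc_cyc_prod:
  fixes u :: "'a ^ 'n::enum"
  assumes "\<And>x. \<phi> differentiable (at x)" and q: "q \<in> {c + 1..c + int CARD('n)}"
  shows "drc form (\<lambda>v. \<phi> (cyc_prod v c)) u (ix q) = grad_cut \<phi> u c (q - 1)"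
  using q dprod_split[of q q "c + int CARD('n)" "cmp u"] dprod_upper[of q q "cmp u"]
  by (simp add: drc_def gradc_cyc_prod[OF assms] grad_cut_def cmp_def dprod_empty mult.assoc)

lemma PBn_cyc_prod:
  fixes u :: "'a ^ 'n::enum"
  assumes "\<And>x. \<phi> differentiable (at x)"
  shows "PBn form A B C D (\<lambda>v. \<phi> (cyc_prod v c)) \<Psi> u =
    (\<Sum>r\<in>{c + 1..c + int CARD('n)}. \<Sum>p\<in>{c + 1..c + int CARD('n)}.
        form (A (ix r) (ix p) (grad_cut \<phi> u c (p - 1))) (drc form \<Psi> u (ix r))
      - form (D (ix r) (ix p) (grad_cut \<phi> u c p)) (dlc form \<Psi> u (ix r))
      + form (B (ix r) (ix p) (grad_cut \<phi> u c p)) (drc form \<Psi> u (ix r))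
      - form (C (ix r) (ix p) (grad_cut \<phi> u c (p - 1))) (dlc form \<Psi> u (ix r)))"
  unfolding PBn_def sum_UNIV_eq_sum_window[where a=c]
  by (intro sum.cong refl) (simp add: dlc_cyc_prod[OF assms] drc_cyc_prod[OF assms])

lemma PBn_cyc_prod_eq_sum_gradc:
  fixes u :: "'a ^ 'n::enum" and c :: int and \<phi> :: "'a \<Rightarrow> real"
  assumes "\<And>x. \<phi> differentiable (at x)"
  defines "W \<equiv> {c + 1..c + int CARD('n)}" and "a \<equiv> grad_cut \<phi> u c"
  shows "PBn form A B C D (\<lambda>v. \<phi> (cyc_prod v c)) \<Psi> u =
    (\<Sum>r\<in>W. form (gradc form \<Psi> u (ix r))
       (cmp u r * (\<Sum>p\<in>W. A (ix r) (ix p) (a (p - 1)) + B (ix r) (ix p) (a p))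
        - (\<Sum>p\<in>W. D (ix r) (ix p) (a p) + C (ix r) (ix p) (a (p - 1))) * cmp u r))"
  unfolding PBn_cyc_prod[OF assms(1)] W_def a_def
  by (intro sum.cong refl)
    (simp add: dlc_def drc_def cmp_def form_mult_right form_mult_left form_linear_simps
      form_sum_right sum_distrib_left sum_distrib_right distrib_left distrib_right
      sum.distrib sum_subtractf)

lemma grad_cut_eq_dl_Tj:
  fixes u :: "'a ^ 'n::enum"
  assumes "\<And>x. \<phi> differentiable (at x)" and "ad_invariant \<phi>" and "q \<in> {0..int CARD('n)}"
  shows "grad_cut \<phi> u 0 q = dl form \<phi> (Tj u q)"
proof -
  have "cyc_prod u 0 = dprod (cmp u) (q + 1) (int CARD('n)) * dprod (cmp u) 1 q"
    using assms(3) dprod_split[of 1 q "int CARD('n)" "cmp u"] by (simp add: cyc_prod_def)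
  then show ?thesis
    by (simp add: grad_cut_def Tj_def ad_invariant_grad_sandwich[OF assms(1,2)])
qed

end

section \<open>Brackets of functions of cyclic products\<close>

locale cyclic_bracket = invariant_form form
  for form :: "'a::{real_algebra_1, euclidean_space} \<Rightarrow> 'a \<Rightarrow> real" +
  fixes A B C D :: "'n::enum \<Rightarrow> 'n \<Rightarrow> 'a \<Rightarrow> 'a"
  assumes cond_i: "\<And>i j. 1 \<le> i \<Longrightarrow> i \<le> int CARD('n) \<Longrightarrow> 1 \<le> j \<Longrightarrow> j \<le> int CARD('n) \<Longrightarrow> i \<noteq> j \<Longrightarrow>
        A (ix (i + 1)) (ix (j + 1)) = (\<lambda>x. - B (ix (i + 1)) (ix j) x) \<and>
        A (ix (i + 1)) (ix (j + 1)) = C (ix i) (ix (j + 1)) \<and>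
        A (ix (i + 1)) (ix (j + 1)) = (\<lambda>x. - D (ix i) (ix j) x)"
    and cond_ii: "\<And>j x. 1 \<le> j \<Longrightarrow> j \<le> int CARD('n) \<Longrightarrow>
        A (ix (j + 1)) (ix (j + 1)) x - D (ix j) (ix j) x + B (ix (j + 1)) (ix j) x
          - C (ix j) (ix (j + 1)) x = 0"
begin

lemma offdiag_relations:
  assumes "(ix i :: 'n) \<noteq> ix j"
  shows "B (ix (i + 1)) (ix j) x = - A (ix (i + 1)) (ix (j + 1)) x"
    and "C (ix i) (ix (j + 1)) x = A (ix (i + 1)) (ix (j + 1)) x"
    and "D (ix i) (ix j) x = - A (ix (i + 1)) (ix (j + 1)) x"
proof -
  have "pos (ix i :: 'n) \<noteq> pos (ix j :: 'n)"
    using assms by (metis ix_pos)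
  then have "A (ix (pos (ix i :: 'n) + 1)) (ix (pos (ix j :: 'n) + 1)) =
        (\<lambda>x. - B (ix (pos (ix i :: 'n) + 1)) (ix (pos (ix j :: 'n))) x) \<and>
      A (ix (pos (ix i :: 'n) + 1)) (ix (pos (ix j :: 'n) + 1)) =
        C (ix (pos (ix i :: 'n))) (ix (pos (ix j :: 'n) + 1)) \<and>
      A (ix (pos (ix i :: 'n) + 1)) (ix (pos (ix j :: 'n) + 1)) =
        (\<lambda>x. - D (ix (pos (ix i :: 'n))) (ix (pos (ix j :: 'n))) x)"
    using pos_in_window[of "ix i :: 'n"] pos_in_window[of "ix j :: 'n"] by (intro cond_i) auto
  then have eqs: "A (ix (i + 1)) (ix (j + 1)) = (\<lambda>x. - B (ix (i + 1)) (ix j) x)"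
      "A (ix (i + 1)) (ix (j + 1)) = C (ix i) (ix (j + 1))"
      "A (ix (i + 1)) (ix (j + 1)) = (\<lambda>x. - D (ix i) (ix j) x)"
    unfolding ix_pos_add ix_pos by blast+
  from eqs(1) show "B (ix (i + 1)) (ix j) x = - A (ix (i + 1)) (ix (j + 1)) x"
    by simp
  from eqs(2) show "C (ix i) (ix (j + 1)) x = A (ix (i + 1)) (ix (j + 1)) x"
    by simp
  from eqs(3) show "D (ix i) (ix j) x = - A (ix (i + 1)) (ix (j + 1)) x"
    by simp
qed

lemma diag_relation:
  "A (ix (j + 1)) (ix (j + 1)) x - D (ix j) (ix j) x + B (ix (j + 1)) (ix j) x
     - C (ix j) (ix (j + 1)) x = 0"
  using cond_ii[of "pos (ix j :: 'n)" x] pos_in_window[of "ix j :: 'n"] by (simp add: ix_pos_add)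

(* The coefficient of form (_ (a p)) (b r) in the bracket of phi o T_c and psi o T_c, once the
   d'-components a (p - 1), b (r - 1) are re-indexed as d-components. *)
definition cut_kernel :: "int \<Rightarrow> int \<Rightarrow> int \<Rightarrow> 'a \<Rightarrow> 'a" where
  "cut_kernel c r p x =
     (if r \<in> {c..c + int CARD('n) - 1} \<and> p \<in> {c..c + int CARD('n) - 1}
      then A (ix (r + 1)) (ix (p + 1)) x else 0)
   - (if r \<in> {c + 1..c + int CARD('n)} \<and> p \<in> {c + 1..c + int CARD('n)}
      then D (ix r) (ix p) x else 0)
   + (if r \<in> {c..c + int CARD('n) - 1} \<and> p \<in> {c + 1..c + int CARD('n)}
      then B (ix (r + 1)) (ix p) x else 0)
   - (if r \<in> {c + 1..c + int CARD('n)} \<and> p \<in> {c..c + int CARD('n) - 1}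
      then C (ix r) (ix (p + 1)) x else 0)"

lemma sum_cut_kernel:
  fixes a b :: "int \<Rightarrow> 'a" and c :: int
  defines "W \<equiv> {c + 1..c + int CARD('n)}"
  shows "(\<Sum>r\<in>{c..c + int CARD('n)}. \<Sum>p\<in>{c..c + int CARD('n)}. form (cut_kernel c r p (a p)) (b r)) =
    (\<Sum>r\<in>W. \<Sum>p\<in>W. form (A (ix r) (ix p) (a (p - 1))) (b (r - 1))
        - form (D (ix r) (ix p) (a p)) (b r) + form (B (ix r) (ix p) (a p)) (b (r - 1))
        - form (C (ix r) (ix p) (a (p - 1))) (b r))"
proof -
  let ?N = "int CARD('n)"
  define W' Q where "W' = {c..c + ?N - 1}" and "Q = {c..c + ?N}"
  have fin: "finite Q" and sub: "W \<subseteq> Q" "W' \<subseteq> Q"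
    by (auto simp: W_def W'_def Q_def)
  have "form (cut_kernel c r p (a p)) (b r) =
      (if r \<in> W' \<and> p \<in> W' then form (A (ix (r + 1)) (ix (p + 1)) (a p)) (b r) else 0)
    - (if r \<in> W \<and> p \<in> W then form (D (ix r) (ix p) (a p)) (b r) else 0)
    + (if r \<in> W' \<and> p \<in> W then form (B (ix (r + 1)) (ix p) (a p)) (b r) else 0)
    - (if r \<in> W \<and> p \<in> W' then form (C (ix r) (ix (p + 1)) (a p)) (b r) else 0)" for r p
    by (simp add: cut_kernel_def W_def W'_def form_linear_simps)
  then have "(\<Sum>r\<in>Q. \<Sum>p\<in>Q. form (cut_kernel c r p (a p)) (b r)) =
      (\<Sum>r\<in>W'. \<Sum>p\<in>W'. form (A (ix (r + 1)) (ix (p + 1)) (a p)) (b r))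
    - (\<Sum>r\<in>W. \<Sum>p\<in>W. form (D (ix r) (ix p) (a p)) (b r))
    + (\<Sum>r\<in>W'. \<Sum>p\<in>W. form (B (ix (r + 1)) (ix p) (a p)) (b r))
    - (\<Sum>r\<in>W. \<Sum>p\<in>W'. form (C (ix r) (ix (p + 1)) (a p)) (b r))"
    by (simp only: sum.distrib sum_subtractf sum_sum_restrict[OF fin sub(2) sub(2)]
        sum_sum_restrict[OF fin sub(1) sub(1)] sum_sum_restrict[OF fin sub(2) sub(1)]
        sum_sum_restrict[OF fin sub(1) sub(2)])
  moreover have "(\<Sum>r\<in>W. g r) = (\<Sum>r\<in>W'. g (r + 1))" for g :: "int \<Rightarrow> real"
    unfolding W_def W'_def using sum_int_interval_shift[of g c "c + ?N"] by simp
  ultimately show ?thesis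
    unfolding Q_def by (simp add: sum.distrib sum_subtractf)
qed

lemma cut_kernel_eq_0:
  assumes r: "r \<in> {c..c + int CARD('n)}" and p: "p \<in> {c..c + int CARD('n)}"
    and not_corner: "\<not> (r \<in> {c, c + int CARD('n)} \<and> p \<in> {c, c + int CARD('n)})"
  shows "cut_kernel c r p x = 0"
proof (cases "(ix r :: 'n) = ix p")
  case True
  have "r \<in> {c + 1..c + int CARD('n)} \<and> p \<in> {c + 1..c + int CARD('n)} \<or>
      r \<in> {(c - 1) + 1..(c - 1) + int CARD('n)} \<and> p \<in> {(c - 1) + 1..(c - 1) + int CARD('n)}"
    using r p not_corner by auto
  then have "r = p"
    using True inj_onD[OF inj_on_ix_window] by metis
  then have "r \<in> {c + 1..c + int CARD('n) - 1}"
    using r not_corner by auto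
  then show ?thesis
    using diag_relation[of r x] by (simp add: cut_kernel_def \<open>r = p\<close>)
next
  case False
  then show ?thesis
    using r p not_corner by (auto simp: cut_kernel_def offdiag_relations[OF False])
qed

lemma cut_kernel_corners:
  "cut_kernel c c c x = A (ix (c + 1)) (ix (c + 1)) x"
  "cut_kernel c c (c + int CARD('n)) x = B (ix (c + 1)) (ix c) x"
  "cut_kernel c (c + int CARD('n)) c x = - C (ix c) (ix (c + 1)) x"
  "cut_kernel c (c + int CARD('n)) (c + int CARD('n)) x = - D (ix c) (ix c) x"
  by (simp_all add: cut_kernel_def)

lemma PBn_cyc_prod_cyc_prod:
  assumes d\<phi>: "\<And>x. \<phi> differentiable (at x)" and d\<psi>: "\<And>x. \<psi> differentiable (at x)"
  shows "PBn form A B C D (\<lambda>v. \<phi> (cyc_prod v c)) (\<lambda>v. \<psi> (cyc_prod v c)) u =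
    PB form (A (ix (c + 1)) (ix (c + 1))) (B (ix (c + 1)) (ix c)) (C (ix c) (ix (c + 1)))
      (D (ix c) (ix c)) \<phi> \<psi> (cyc_prod u c)"
proof -
  let ?N = "int CARD('n)" and ?a = "grad_cut \<phi> u c" and ?b = "grad_cut \<psi> u c"
  have "PBn form A B C D (\<lambda>v. \<phi> (cyc_prod v c)) (\<lambda>v. \<psi> (cyc_prod v c)) u =
      (\<Sum>r\<in>{c..c + ?N}. \<Sum>p\<in>{c..c + ?N}. form (cut_kernel c r p (?a p)) (?b r))"
    unfolding PBn_cyc_prod[OF d\<phi>] sum_cut_kernel
    by (intro sum.cong refl) (simp add: dlc_cyc_prod[OF d\<psi>] drc_cyc_prod[OF d\<psi>])
  also have "\<dots> = (\<Sum>(r, p)\<in>{c, c + ?N} \<times> {c, c + ?N}. form (cut_kernel c r p (?a p)) (?b r))"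
    unfolding sum.cartesian_product
  proof (rule sum.mono_neutral_right)
    show "\<forall>i\<in>{c..c + ?N} \<times> {c..c + ?N} - {c, c + ?N} \<times> {c, c + ?N}.
        (case i of (r, p) \<Rightarrow> form (cut_kernel c r p (?a p)) (?b r)) = 0"
    proof
      fix i assume i: "i \<in> {c..c + ?N} \<times> {c..c + ?N} - {c, c + ?N} \<times> {c, c + ?N}"
      obtain r p where rp: "i = (r, p)"
        by fastforce
      have "cut_kernel c r p (?a p) = 0"
        using i unfolding rp by (intro cut_kernel_eq_0) auto
      then show "(case i of (r, p) \<Rightarrow> form (cut_kernel c r p (?a p)) (?b r)) = 0"
        by (simp add: rp form_linear_simps)
    qed
  qed auto
  also have "\<dots> = form (cut_kernel c c c (?a c)) (?b c)
      + form (cut_kernel c c (c + ?N) (?a (c + ?N))) (?b c)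
      + form (cut_kernel c (c + ?N) c (?a c)) (?b (c + ?N))
      + form (cut_kernel c (c + ?N) (c + ?N) (?a (c + ?N))) (?b (c + ?N))"
    by (simp add: sum.cartesian_product[symmetric])
  also have "\<dots> = PB form (A (ix (c + 1)) (ix (c + 1))) (B (ix (c + 1)) (ix c))
      (C (ix c) (ix (c + 1))) (D (ix c) (ix c)) \<phi> \<psi> (cyc_prod u c)"
    unfolding cut_kernel_corners grad_cut_lower grad_cut_upper PB_def
    by (simp add: bilinear_lneg[OF form_bilinear])
  finally show ?thesis .
qed

definition lax :: "('a \<Rightarrow> real) \<Rightarrow> ('a, 'n) vec \<Rightarrow> int \<Rightarrow> 'a" where
  "lax \<phi> u j = A (ix (j + 1)) (ix (j + 1)) (dl form \<phi> (Tj u j))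
     + B (ix (j + 1)) (ix j) (dl form \<phi> (Tj u j))"

definition lax_field :: "('a \<Rightarrow> real) \<Rightarrow> ('a, 'n) vec \<Rightarrow> ('a, 'n) vec" where
  "lax_field \<phi> u = (\<chi> k. cmp u (pos k) * lax \<phi> u (pos k - 1) - lax \<phi> u (pos k) * cmp u (pos k))"

lemma Tj_0_eq_Tj_card: "Tj u 0 = Tj u (int CARD('n))" for u :: "('a, 'n) vec"
  by (simp add: Tj_def dprod_empty)

lemma field_left_eq_lax:
  assumes a: "\<And>q. q \<in> {0..int CARD('n)} \<Longrightarrow> a q = dl form \<phi> (Tj u q)"
    and r: "r \<in> {1..int CARD('n)}"
  shows "(\<Sum>p\<in>{1..int CARD('n)}. A (ix r) (ix p) (a (p - 1)) + B (ix r) (ix p) (a p)) =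
    lax \<phi> u (r - 1)"
proof -
  let ?W = "{1..int CARD('n)}"
  define F where "F p = A (ix r) (ix p) (a (p - 1)) + B (ix r) (ix (p - 1)) (a (p - 1))" for p
  have "a 0 = a (int CARD('n))"
    using a Tj_0_eq_Tj_card by simp
  moreover have "(ix (int CARD('n)) :: 'n) = ix 0"
    using ix_add_card[of 0] by simp
  ultimately have "(\<Sum>p\<in>?W. B (ix r) (ix p) (a p)) = (\<Sum>p\<in>?W. B (ix r) (ix (p - 1)) (a (p - 1)))"
    by (intro sum_interval_rotate) simp_all
  then have "(\<Sum>p\<in>?W. A (ix r) (ix p) (a (p - 1)) + B (ix r) (ix p) (a p)) = (\<Sum>p\<in>?W. F p)"
    by (simp add: F_def sum.distrib)
  also have "\<dots> = F r"
  proof -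
    have "F p = 0" if "p \<in> ?W" "p \<noteq> r" for p
    proof -
      from that have "(ix (r - 1) :: 'n) \<noteq> ix (p - 1)"
        using r by (intro ix_neq_in_window[where a="-1"]) auto
      then show ?thesis
        using offdiag_relations(1)[of "r - 1" "p - 1"] by (simp add: F_def)
    qed
    then show ?thesis
      using sum.remove[of ?W r F] r by (simp add: sum.neutral)
  qed
  also have "\<dots> = lax \<phi> u (r - 1)"
    using r by (simp add: F_def lax_def a)
  finally show ?thesis .
qed

lemma field_right_eq_lax:
  assumes a: "\<And>q. q \<in> {0..int CARD('n)} \<Longrightarrow> a q = dl form \<phi> (Tj u q)"
    and r: "r \<in> {1..int CARD('n)}"
  shows "(\<Sum>p\<in>{1..int CARD('n)}. D (ix r) (ix p) (a p) + C (ix r) (ix p) (a (p - 1))) = lax \<phi> u r"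
proof -
  let ?W = "{1..int CARD('n)}"
  define F where "F p = D (ix r) (ix p) (a p) + C (ix r) (ix (p + 1)) (a p)" for p
  have "a 0 = a (int CARD('n))"
    using a Tj_0_eq_Tj_card by simp
  moreover have "(ix (int CARD('n) + 1) :: 'n) = ix 1"
    using ix_add_card[of 1] by (simp add: add.commute)
  ultimately have "(\<Sum>p\<in>?W. C (ix r) (ix (p + 1)) (a p)) = (\<Sum>p\<in>?W. C (ix r) (ix p) (a (p - 1)))"
    using sum_interval_rotate[where g="\<lambda>p. C (ix r) (ix (p + 1)) (a p)" and N="int CARD('n)"]
    by simp
  then have "(\<Sum>p\<in>?W. D (ix r) (ix p) (a p) + C (ix r) (ix p) (a (p - 1))) = (\<Sum>p\<in>?W. F p)"
    by (simp add: F_def sum.distrib)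
  also have "\<dots> = F r"
  proof -
    have "F p = 0" if "p \<in> ?W" "p \<noteq> r" for p
    proof -
      from that have "(ix r :: 'n) \<noteq> ix p"
        using r by (intro ix_neq_in_window[where a=0]) auto
      then show ?thesis
        using offdiag_relations(2,3)[of r p] by (simp add: F_def)
    qed
    then show ?thesis
      using sum.remove[of ?W r F] r by (simp add: sum.neutral)
  qed
  also have "\<dots> = lax \<phi> u r"
    using r diag_relation[of r "a r"] by (simp add: F_def lax_def a algebra_simps)
  finally show ?thesis .
qed

lemma PBn_Mon_linear_eq_lax_field:
  assumes "\<And>x. \<phi> differentiable (at x)" and "ad_invariant \<phi>" and l: "linear l"
  shows "PBn form A B C D (\<lambda>v. \<phi> (Mon v)) l u = l (lax_field \<phi> u)"
proof -
  let ?W = "{1..int CARD('n)}"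
  have Mon: "Mon v = cyc_prod v 0" for v :: "('a, 'n) vec"
    by (simp add: Mon_def cyc_prod_def)
  have a: "grad_cut \<phi> u 0 q = dl form \<phi> (Tj u q)" if "q \<in> {0..int CARD('n)}" for q
    using grad_cut_eq_dl_Tj[OF assms(1,2) that] .
  have "PBn form A B C D (\<lambda>v. \<phi> (Mon v)) l u =
      (\<Sum>r\<in>?W. form (gradc form l u (ix r)) (cmp u r * lax \<phi> u (r - 1) - lax \<phi> u r * cmp u r))"
    unfolding Mon PBn_cyc_prod_eq_sum_gradc[OF assms(1)] add_0
    by (intro sum.cong refl) (simp only: field_left_eq_lax[OF a] field_right_eq_lax[OF a])
  also have "\<dots> = (\<Sum>k\<in>UNIV. form (gradc form l u k) (lax_field \<phi> u $ k))"
    unfolding sum_UNIV_eq_sum_window[where a=0] add_0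
    by (intro sum.cong refl) (simp add: lax_field_def pos_ix)
  also have "\<dots> = l (lax_field \<phi> u)"
    by (rule linear_eq_sum_gradc[OF l, symmetric])
  finally show ?thesis .
qed

end

theorem theorem1:
  fixes form :: "'a::{real_algebra_1, euclidean_space} \<Rightarrow> 'a \<Rightarrow> real"
    and A B C D :: "'n::enum \<Rightarrow> 'n \<Rightarrow> 'a \<Rightarrow> 'a"
  assumes form_bilinear: "bilinear form"
    and form_sym: "\<And>u v. form u v = form v u"
    and form_nondeg: "\<And>v. (\<forall>w. form v w = 0) \<Longrightarrow> v = 0"
    and form_inv: "\<And>u v w. form (u * v) w = form u (v * w)"
    and lin: "\<And>i j. linear (A i j) \<and> linear (B i j) \<and> linear (C i j) \<and> linear (D i j)"
    and adjA: "\<And>i j u v. form (A i j u) v = - form u (A j i v)"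
    and adjD: "\<And>i j u v. form (D i j u) v = - form u (D j i v)"
    and adjB: "\<And>i j u v. form (B i j u) v = form u (C j i v)"
    and poisson: "is_poisson (PBn form A B C D)"
    and cond_i: "\<And>i j. 1 \<le> i \<Longrightarrow> i \<le> int CARD('n) \<Longrightarrow> 1 \<le> j \<Longrightarrow> j \<le> int CARD('n) \<Longrightarrow> i \<noteq> j \<Longrightarrow>
        A (ix (i + 1)) (ix (j + 1)) = (\<lambda>x. - B (ix (i + 1)) (ix j) x) \<and>
        A (ix (i + 1)) (ix (j + 1)) = C (ix i) (ix (j + 1)) \<and>
        A (ix (i + 1)) (ix (j + 1)) = (\<lambda>x. - D (ix i) (ix j) x)"
    and cond_ii: "\<And>j x. 1 \<le> j \<Longrightarrow> j \<le> int CARD('n) \<Longrightarrow>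
        A (ix (j + 1)) (ix (j + 1)) x - D (ix j) (ix j) x + B (ix (j + 1)) (ix j) x
          - C (ix j) (ix (j + 1)) x = 0"
  shows
    "(\<forall>j::nat. \<forall>\<phi> \<psi> :: 'a \<Rightarrow> real. smooth \<phi> \<longrightarrow> smooth \<psi> \<longrightarrow>
        PBn form A B C D (\<lambda>u. \<phi> (Mon ((shift ^^ j) u))) (\<lambda>u. \<psi> (Mon ((shift ^^ j) u)))
        = (\<lambda>u. PB form (A (ix (int j + 1)) (ix (int j + 1))) (B (ix (int j + 1)) (ix (int j)))
                        (C (ix (int j)) (ix (int j + 1))) (D (ix (int j)) (ix (int j)))
                        \<phi> \<psi> (Mon ((shift ^^ j) u))))
     \<and>
     (\<forall>\<phi> :: 'a \<Rightarrow> real. smooth \<phi> \<longrightarrow> ad_invariant \<phi> \<longrightarrow>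
       (let \<Phi> = (\<lambda>u. \<phi> (Mon u));
            R = (\<lambda>j x. A (ix (j + 1)) (ix (j + 1)) x + B (ix (j + 1)) (ix j) x);
            L = (\<lambda>u j. R j (dl form \<phi> (Tj u j)));
            V = (\<lambda>u. \<chi> k. cmp u (pos k) * L u (pos k - 1) - L u (pos k) * cmp u (pos k))
        in \<forall>(\<gamma> :: real \<Rightarrow> ('a, 'n) vec) t.
             (\<forall>l :: ('a, 'n) vec \<Rightarrow> real. linear l \<longrightarrow>
                ((\<lambda>s. l (\<gamma> s)) has_real_derivative PBn form A B C D \<Phi> l (\<gamma> t)) (at t))
             \<longleftrightarrow> (\<gamma> has_vector_derivative V (\<gamma> t)) (at t)))"
proof -
  interpret cyclic_bracket form A B C D
    by (intro cyclic_bracket.intro invariant_form.intro cyclic_bracket_axioms.intro)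
      (fact form_bilinear form_sym form_nondeg form_inv cond_i cond_ii)+
  have poisson_map:
    "PBn form A B C D (\<lambda>u. \<phi> (Mon ((shift ^^ j) u))) (\<lambda>u. \<psi> (Mon ((shift ^^ j) u)))
     = (\<lambda>u. PB form (A (ix (int j + 1)) (ix (int j + 1))) (B (ix (int j + 1)) (ix (int j)))
          (C (ix (int j)) (ix (int j + 1))) (D (ix (int j)) (ix (int j))) \<phi> \<psi>
          (Mon ((shift ^^ j) u)))"
    if "smooth \<phi>" "smooth \<psi>" for j :: nat and \<phi> \<psi> :: "'a \<Rightarrow> real"
    unfolding Mon_funpow_shift
    by (intro ext PBn_cyc_prod_cyc_prod) (use that smooth_imp_differentiable in blast)+
  have hamiltonian:
    "(\<forall>l. linear l \<longrightarrow>
        ((\<lambda>s. l (\<gamma> s)) has_real_derivative PBn form A B C D (\<lambda>u. \<phi> (Mon u)) l (\<gamma> t)) (at t))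
     \<longleftrightarrow> (\<gamma> has_vector_derivative lax_field \<phi> (\<gamma> t)) (at t)"
    if "smooth \<phi>" "ad_invariant \<phi>" for \<phi> :: "'a \<Rightarrow> real" and \<gamma> :: "real \<Rightarrow> ('a, 'n) vec" and t
    using has_vector_derivative_iff_linear_functionals[of \<gamma> "lax_field \<phi> (\<gamma> t)" t]
    by (simp add: PBn_Mon_linear_eq_lax_field[OF smooth_imp_differentiable[OF that(1)] that(2)])
  show ?thesis
    using poisson_map hamiltonian by (simp add: Let_def lax_field_def lax_def)
qed

end
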